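(* Let $\gamma_1,\gamma_2>0$ and consider the birth-death chain RDS $(\theta,\varphi)$ described in the context. For $i\in\{0,1\}$ let $a_i(q):=\lim_{n\to\infty}\varphi^{2n}_{\theta^{-2n}q}(i)$ (which exists $\mathbb{P}$-a.s.). The weak attractor of this RDS is $A_q=\{a_0(q),a_1(q)\}$, and it (i) is a random periodic orbit of period $2$, i.e. $\varphi^1_q(a_0(q))=a_1(\theta q)$ and $\varphi^1_q(a_1(q))=a_0(\theta q)$ for $\mathbb{P}$-a.e. $q$; (ii) is a (strong) pullback attractor and a (strong) forward attractor; (iii) satisfies $|a_0(q)-a_1(q)|=1$ for $\mathbb{P}$-a.e. $q$.
   Context: Noise space $\mathcal{Q}=\{q=(q_n)_{n\in\mathbb{Z}}: q_n\in[0,1]\}$ with product Borel $\sigma$-algebra and $\mathbb{P}=\lambda^{\mathbb{Z}}$ ($\lambda$ Lebesgue on $[0,1]$), invertible shift $(\theta q)_n=q_{n+1}$. For $q\in\mathcal{Q}$, $f_q(x)=x+1$ if $q_0<\frac{\gamma_1}{\gamma_1+\gamma_2x}$ and $f_q(x)=x-1$ otherwise; $\varphi^0_q=\mathrm{id}$, $\varphi^n_q=f_{\theta^{n-1}q}\circ\cdots\circ f_q$. With $d(x,B)=\inf_{y\in B}|x-y|$ and $\mathrm{dist}(A,B)=\sup_{x\in A}d(x,B)$: a weak attractor is a map $A:\mathcal{Q}\to\mathcal{P}(\mathbb{N}_0)$ with $q\mapsto d(x,A_q)$ measurable, $A_q$ nonempty finite, $\varphi^n_q(A_q)=A_{\theta^nq}$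 for all $n$ $\mathbb{P}$-a.s., and $\mathrm{dist}(\varphi^n_q(B),A_{\theta^nq})\to0$ in probability for every finite $B$ (it is unique up to $\mathbb{P}$-a.s. equality). Such an invariant $A$ is a pullback attractor if $\lim_n\mathrm{dist}(\varphi^n_{\theta^{-n}q}(B),A_q)=0$ $\mathbb{P}$-a.s. for every finite $B$, and a forward attractor if $\lim_n\mathrm{dist}(\varphi^n_q(B),A_{\theta^nq})=0$ $\mathbb{P}$-a.s. for every finite $B$. *)

theory Defs
  imports "HOL-Probability.Probability"
begin

type_synonym noise = "int \<Rightarrow> real"

definition Pn :: "noise measure" where
  "Pn = PiM UNIV (\<lambda>_::int. restrict_space lborel {0..1::real})"

text \<open>Shift by an integer: shift k q = theta^k q, (theta q)_n = q_(n+1).\<close>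
definition shift :: "int \<Rightarrow> noise \<Rightarrow> noise" where
  "shift k q = (\<lambda>m. q (m + k))"

definition fstep :: "real \<Rightarrow> real \<Rightarrow> noise \<Rightarrow> nat \<Rightarrow> nat" where
  "fstep g1 g2 q x = (if q 0 < g1 / (g1 + g2 * real x) then x + 1 else x - 1)"

primrec phi :: "real \<Rightarrow> real \<Rightarrow> nat \<Rightarrow> noise \<Rightarrow> nat \<Rightarrow> nat" where
  "phi g1 g2 0 q = id"
| "phi g1 g2 (Suc n) q = fstep g1 g2 (shift (int n) q) \<circ> phi g1 g2 n q"

definition pdist :: "nat \<Rightarrow> nat set \<Rightarrow> real" where
  "pdist x B = (INF y\<in>B. \<bar>real x - real y\<bar>)"

definition hdist :: "nat set \<Rightarrow> nat set \<Rightarrow> real" where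
  "hdist A B = (if A = {} then 0 else (SUP x\<in>A. pdist x B))"

definition random_finite_set :: "(noise \<Rightarrow> nat set) \<Rightarrow> bool" where
  "random_finite_set A \<longleftrightarrow>
     (\<forall>x::nat. (\<lambda>q. pdist x (A q)) \<in> borel_measurable Pn) \<and>
     (\<forall>q\<in>space Pn. A q \<noteq> {} \<and> finite (A q))"

definition invariant :: "real \<Rightarrow> real \<Rightarrow> (noise \<Rightarrow> nat set) \<Rightarrow> bool" where
  "invariant g1 g2 A \<longleftrightarrow>
     (AE q in Pn. \<forall>n. phi g1 g2 n q ` A q = A (shift (int n) q))"

definition weak_attractor :: "real \<Rightarrow> real \<Rightarrow> (noise \<Rightarrow> nat set) \<Rightarrow> bool" where
  "weak_attractor g1 g2 A \<longleftrightarrow> random_finite_set A \<and> invariant g1 g2 A \<and>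
     (\<forall>B::nat set. finite B \<longrightarrow>
        (\<forall>n. (\<lambda>q. hdist (phi g1 g2 n q ` B) (A (shift (int n) q))) \<in> borel_measurable Pn) \<and>
        (\<forall>e>0. (\<lambda>n. measure Pn {q\<in>space Pn. hdist (phi g1 g2 n q ` B) (A (shift (int n) q)) > e})
                 \<longlonglongrightarrow> 0))"

definition pullback_attractor :: "real \<Rightarrow> real \<Rightarrow> (noise \<Rightarrow> nat set) \<Rightarrow> bool" where
  "pullback_attractor g1 g2 A \<longleftrightarrow> random_finite_set A \<and> invariant g1 g2 A \<and>
     (\<forall>B::nat set. finite B \<longrightarrow>
        (AE q in Pn. (\<lambda>n. hdist (phi g1 g2 n (shift (- int n) q) ` B) (A q)) \<longlonglongrightarrow> 0))"

definition forward_attractor :: "real \<Rightarrow> real \<Rightarrow> (noise \<Rightarrow> nat set) \<Rightarrow> bool" where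
  "forward_attractor g1 g2 A \<longleftrightarrow> random_finite_set A \<and> invariant g1 g2 A \<and>
     (\<forall>B::nat set. finite B \<longrightarrow>
        (AE q in Pn. (\<lambda>n. hdist (phi g1 g2 n q ` B) (A (shift (int n) q))) \<longlonglongrightarrow> 0))"

definition aseq :: "real \<Rightarrow> real \<Rightarrow> nat \<Rightarrow> noise \<Rightarrow> nat \<Rightarrow> nat" where
  "aseq g1 g2 i q n = phi g1 g2 (2 * n) (shift (- (2 * int n)) q) i"

definition alim :: "real \<Rightarrow> real \<Rightarrow> nat \<Rightarrow> noise \<Rightarrow> nat" where
  "alim g1 g2 i q = lim (aseq g1 g2 i q)"

end

(* Fix K with e = birth_prob g1 g2 K <= 1/4096 and let c = birth_prob g1 g2 1 < 1.  As long as no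
   noise value equals 1, the chain changes parity at every step and adjacent states stay adjacent.
   Above K it is dominated by the walk that steps up exactly when the noise is below e, and by
   Lindley's recursion its excess over K is at most the walk reflected at 0.  On a descent block
   (K + 1 consecutive noise values in [c, 1)) every state <= K is driven into the two-cycle {0, 1},
   with a phase determined by its parity.  Large deviations of the walk and independence of disjoint
   stretches of noise show that almost surely such blocks occur right after walk excursions that
   push all relevant trajectories below K, both in the past (for every time shift) and in the
   future.  Hence the pullback images of all even and of all odd initial states become constant,
   which defines a_0 and a_1; they are images of adjacent states, and the forward trajectories of
   any finite set coalesce with the orbit of {a_0, a_1}. *)

theory Submission
  imports Defs
begin

section \<open>Deterministic dynamics\<close>

lemma shift_add: "shift a (shift b q) = shift (a + b) q"
  unfolding shift_def by (simp add: add.commute add.left_commute)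

lemma shift_0 [simp]: "shift 0 q = q"
  unfolding shift_def by simp

lemma shift_apply: "shift a q k = q (k + a)"
  unfolding shift_def by simp

lemma phi_add: "phi g1 g2 (m + n) q x = phi g1 g2 n (shift (int m) q) (phi g1 g2 m q x)"
  by (induction n) (simp_all add: shift_add add.commute)

definition birth_prob :: "real \<Rightarrow> real \<Rightarrow> nat \<Rightarrow> real" where
  "birth_prob g1 g2 x = g1 / (g1 + g2 * real x)"

lemma fstep_birth_prob: "fstep g1 g2 q x = (if q 0 < birth_prob g1 g2 x then x + 1 else x - 1)"
  unfolding fstep_def birth_prob_def by simp

lemma birth_prob_antimono:
  assumes "g1 > 0" "g2 > 0" "x \<le> y"
  shows "birth_prob g1 g2 y \<le> birth_prob g1 g2 x"
  unfolding birth_prob_def using assms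
  by (intro divide_left_mono) (auto intro!: mult_left_mono mult_pos_pos add_pos_nonneg)

lemma birth_prob_0: "g1 > 0 \<Longrightarrow> birth_prob g1 g2 0 = 1"
  unfolding birth_prob_def by simp

lemma birth_prob_bounds:
  assumes "g1 > 0" "g2 > 0" "K \<ge> 1"
  shows "0 \<le> birth_prob g1 g2 K" "birth_prob g1 g2 K \<le> birth_prob g1 g2 1" "birth_prob g1 g2 1 < 1"
  using birth_prob_antimono[OF assms] assms
  by (auto simp: birth_prob_def intro!: divide_nonneg_pos add_pos_nonneg)

lemma birth_prob_small:
  assumes "g1 > 0" "g2 > 0" "\<epsilon> > 0"
  obtains K where "K \<ge> 1" "birth_prob g1 g2 K \<le> \<epsilon>"
proof
  define K where "K = nat \<lceil>g1 / (g2 * \<epsilon>)\<rceil> + 1"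
  show "K \<ge> 1" unfolding K_def by simp
  have "g1 / (g2 * \<epsilon>) \<le> real K" unfolding K_def by linarith
  then have "g1 \<le> \<epsilon> * (g2 * real K)" using assms by (simp add: field_simps)
  then have "g1 \<le> \<epsilon> * (g1 + g2 * real K)"
    using assms by (simp add: distrib_left add_increasing)
  then show "birth_prob g1 g2 K \<le> \<epsilon>"
    using assms unfolding birth_prob_def by (simp add: pos_divide_le_eq add_pos_nonneg)
qed

lemma fstep_le_Suc: "fstep g1 g2 q x \<le> x + 1"
  unfolding fstep_def by auto

text \<open>The boundary state 0 always moves up (its birth probability is 1), so as long as no noise
  value equals 1 every step changes the parity.\<close>

lemma fstep_parity:
  assumes "g1 > 0" "q 0 < 1"
  shows "even (fstep g1 g2 q x) \<longleftrightarrow> odd x"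
  using assms birth_prob_0[of g1 g2] by (cases "x = 0") (auto simp: fstep_birth_prob)

lemma phi_parity:
  assumes "g1 > 0" "\<forall>k. q k < 1"
  shows "even (phi g1 g2 n q x) \<longleftrightarrow> even (x + n)"
proof (induction n)
  case (Suc n)
  have "shift (int n) q 0 < 1" using assms by (simp add: shift_apply)
  then show ?case using Suc fstep_parity[OF assms(1)] by simp
qed simp

lemma fstep_adjacent:
  assumes "g1 > 0" "g2 > 0" "q 0 < 1"
  shows "fstep g1 g2 q (Suc x) = Suc (fstep g1 g2 q x) \<or> fstep g1 g2 q x = Suc (fstep g1 g2 q (Suc x))"
  using birth_prob_antimono[OF assms(1,2), of x "Suc x"] birth_prob_0[OF assms(1), of g2] assms(3)
  by (cases x) (auto simp: fstep_birth_prob)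

lemma phi_adjacent:
  assumes "g1 > 0" "g2 > 0" "\<forall>k. q k < 1"
  shows "\<bar>int (phi g1 g2 n q x) - int (phi g1 g2 n q (Suc x))\<bar> = 1"
proof (induction n)
  case (Suc n)
  have q0: "shift (int n) q 0 < 1" using assms by (simp add: shift_apply)
  note adj = fstep_adjacent[where q="shift (int n) q", OF assms(1,2) q0]
  let ?a = "phi g1 g2 n q x" and ?b = "phi g1 g2 n q (Suc x)"
  have "?b = Suc ?a \<or> ?a = Suc ?b" using Suc by linarith
  then show ?case
    using adj[of ?a] adj[of ?b] by auto
qed simp

section \<open>Domination by a random walk\<close>

definition walk_incr :: "real \<Rightarrow> real \<Rightarrow> int" where
  "walk_incr e r = (if r < e then 1 else -1)"

definition walk :: "real \<Rightarrow> noise \<Rightarrow> int \<Rightarrow> int \<Rightarrow> int" where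
  "walk e q a b = (\<Sum>k\<in>{a..<b}. walk_incr e (q k))"

lemma walk_empty [simp]: "walk e q a a = 0"
  unfolding walk_def by simp

lemma walk_snoc: "a \<le> b \<Longrightarrow> walk e q a (b + 1) = walk e q a b + walk_incr e (q b)"
proof -
  assume "a \<le> b"
  then have "{a..<b + 1} = insert b {a..<b}" by auto
  then show ?thesis unfolding walk_def by simp
qed

lemma walk_split: "a \<le> b \<Longrightarrow> b \<le> c \<Longrightarrow> walk e q a c = walk e q a b + walk e q b c"
proof -
  assume "a \<le> b" "b \<le> c"
  then have "{a..<c} = {a..<b} \<union> {b..<c}" by auto
  then show ?thesis unfolding walk_def by (simp add: sum.union_disjoint)
qed

lemma walk_shift: "walk e (shift s q) a b = walk e q (a + s) (b + s)"
  unfolding walk_def shift_def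
  by (rule sum.reindex_bij_witness[where i="\<lambda>k. k - s" and j="\<lambda>k. k + s"]) auto

lemma walk_cong: "(\<And>k. a \<le> k \<Longrightarrow> k < b \<Longrightarrow> q k = q' k) \<Longrightarrow> walk e q a b = walk e q' a b"
  unfolding walk_def by (intro sum.cong) auto

lemma walk_descent:
  assumes "a \<le> b" "\<forall>k\<in>{a..<b}. e \<le> q k"
  shows "walk e q a b = a - b"
proof -
  have "walk e q a b = (\<Sum>k\<in>{a..<b}. -1)"
    unfolding walk_def walk_incr_def using assms(2) by (intro sum.cong) fastforce+
  then show ?thesis using assms(1) by simp
qed

lemma walk_le_length: "a \<le> b \<Longrightarrow> walk e q a b \<le> b - a"
  using sum_mono[of "{a..<b}" "\<lambda>k. walk_incr e (q k)" "\<lambda>_. 1"]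
  unfolding walk_def walk_incr_def by simp

definition excess :: "nat \<Rightarrow> nat \<Rightarrow> int" where
  "excess K x = max (int x - int K) 0"

lemma excess_fstep_le:
  assumes "g1 > 0" "g2 > 0" "K \<ge> 1"
  shows "excess K (fstep g1 g2 q x) \<le> max (excess K x + walk_incr (birth_prob g1 g2 K) (q 0)) 0"
proof (cases "q 0 < birth_prob g1 g2 K \<or> x < K")
  case True
  then show ?thesis using fstep_le_Suc[of g1 g2 q x] by (auto simp: excess_def walk_incr_def)
next
  case False
  then have "\<not> q 0 < birth_prob g1 g2 x"
    using birth_prob_antimono[OF assms(1,2), of K x] by simp
  then show ?thesis using False assms(3) by (simp add: fstep_birth_prob excess_def walk_incr_def)
qed

text \<open>Lindley's recursion: the excess of the chain over \<open>K\<close> is dominated by the walk with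
  up-probability \<open>birth_prob g1 g2 K\<close> reflected at 0, i.e. by the larger of the walk started
  from the initial excess and the maximal walk increment ending at time \<open>n\<close>.\<close>

lemma excess_phi_le_walk:
  assumes "g1 > 0" "g2 > 0" "K \<ge> 1"
  defines "e \<equiv> birth_prob g1 g2 K"
  shows "excess K (phi g1 g2 n q x) \<le> excess K x + walk e q 0 (int n) \<or>
         (\<exists>u\<in>{0..int n}. excess K (phi g1 g2 n q x) \<le> walk e q u (int n))"
proof (induction n)
  case (Suc n)
  have step: "excess K (phi g1 g2 (Suc n) q x) \<le> max (excess K (phi g1 g2 n q x) + walk_incr e (q (int n))) 0"
    using excess_fstep_le[OF assms(1-3), of "shift (int n) q" "phi g1 g2 n q x"]
    by (simp add: shift_apply e_def)
  have walk_Suc: "walk e q u (int (Suc n)) = walk e q u (int n) + walk_incr e (q (int n))"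
    if "u \<le> int n" for u
    using walk_snoc[OF that] by (simp add: add.commute)
  show ?case
  proof (cases "excess K (phi g1 g2 (Suc n) q x) \<le> 0")
    case True
    then show ?thesis by (intro disjI2 bexI[of _ "int (Suc n)"]) simp_all
  next
    case False
    with step have step': "excess K (phi g1 g2 (Suc n) q x) \<le> excess K (phi g1 g2 n q x) + walk_incr e (q (int n))"
      by linarith
    from Suc show ?thesis
    proof
      assume "excess K (phi g1 g2 n q x) \<le> excess K x + walk e q 0 (int n)"
      then show ?thesis using step' walk_Suc[of 0] by (intro disjI1) linarith
    next
      assume "\<exists>u\<in>{0..int n}. excess K (phi g1 g2 n q x) \<le> walk e q u (int n)"
      then obtain u where "u \<in> {0..int n}" "excess K (phi g1 g2 n q x) \<le> walk e q u (int n)"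
        by blast
      then show ?thesis using step' walk_Suc[of u] by (intro disjI2 bexI[of _ u]) auto
    qed
  qed
qed simp

lemma phi_le_threshold:
  assumes "g1 > 0" "g2 > 0" "K \<ge> 1"
    and "\<forall>u\<in>{0..int n}. walk (birth_prob g1 g2 K) q u (int n) \<le> 0"
    and "excess K x + walk (birth_prob g1 g2 K) q 0 (int n) \<le> 0"
  shows "phi g1 g2 n q x \<le> K"
proof -
  have "excess K (phi g1 g2 n q x) \<le> 0"
    using excess_phi_le_walk[OF assms(1-3), of n q x] assms(4,5) by force
  then show ?thesis unfolding excess_def by simp
qed

text \<open>On a descent block for \<open>c = birth_prob g1 g2 1\<close> every positive state moves down while 0
  moves up, so the chain descends to the two-cycle \<open>{0, 1}\<close>.\<close>

definition descent_block :: "real \<Rightarrow> int \<Rightarrow> nat \<Rightarrow> noise \<Rightarrow> bool" where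
  "descent_block c a L q \<longleftrightarrow> (\<forall>k\<in>{a..<a + int L}. c \<le> q k \<and> q k < 1)"

lemma descent_block_shift: "descent_block c a L (shift r q) \<longleftrightarrow> descent_block c (a + r) L q"
  unfolding descent_block_def shift_apply
proof (intro iffI ballI)
  fix k assume blk: "\<forall>j\<in>{a..<a + int L}. c \<le> q (j + r) \<and> q (j + r) < 1"
    and "k \<in> {a + r..<a + r + int L}"
  then have "k - r \<in> {a..<a + int L}" by auto
  then show "c \<le> q k \<and> q k < 1" using blk by fastforce
qed auto

lemma phi_descent_block:
  assumes g: "g1 > 0" "g2 > 0" and blk: "descent_block (birth_prob g1 g2 1) 0 L q"
  shows "n \<le> L \<Longrightarrow> phi g1 g2 n q y = (if n \<le> y then y - n else (n - y) mod 2)"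
proof (induction n)
  case (Suc n)
  then have IH: "phi g1 g2 n q y = (if n \<le> y then y - n else (n - y) mod 2)" by simp
  have qn: "birth_prob g1 g2 1 \<le> q (int n)" "q (int n) < 1"
    using blk Suc.prems unfolding descent_block_def by auto
  have down: "fstep g1 g2 (shift (int n) q) v = v - 1" if "v \<ge> 1" for v
    using birth_prob_antimono[OF g that] qn by (simp add: fstep_birth_prob shift_apply)
  have up: "fstep g1 g2 (shift (int n) q) 0 = 1"
    using qn birth_prob_0[OF g(1), of g2] by (simp add: fstep_birth_prob shift_apply)
  let ?v = "phi g1 g2 n q y"
  show ?case
  proof (cases "?v = 0")
    case True
    have "\<not> Suc n \<le> y" using True IH by (auto split: if_splits)
    moreover have "(Suc n - y) mod 2 = 1"
    proof (cases "n \<le> y")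
      case True
      then show ?thesis using \<open>?v = 0\<close> IH by simp
    next
      case False
      then have "(n - y) mod 2 = 0" "Suc n - y = Suc (n - y)" using \<open>?v = 0\<close> IH by simp_all
      then show ?thesis by presburger
    qed
    ultimately show ?thesis using True up by simp
  next
    case False
    have step: "phi g1 g2 (Suc n) q y = ?v - 1" using False down[of ?v] by simp
    show ?thesis
    proof (cases "n \<le> y")
      case True
      then show ?thesis using IH False step by auto
    next
      case n_gt: False
      then have "(n - y) mod 2 = 1" using IH False by presburger
      then show ?thesis using IH step n_gt by (simp add: Suc_diff_le) presburger
    qed
  qed
qed simp

lemma phi_across_descent_block:
  assumes "g1 > 0" "g2 > 0" "descent_block (birth_prob g1 g2 1) r (K + 1) q" "z \<le> K"
  shows "phi g1 g2 (K + 1) (shift r q) z = (if even z = even K then 1 else 0)"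
proof -
  have "descent_block (birth_prob g1 g2 1) 0 (K + 1) (shift r q)"
    using assms(3) by (simp add: descent_block_shift)
  from phi_descent_block[OF assms(1,2) this, of "K + 1" z] assms(4)
  have "phi g1 g2 (K + 1) (shift r q) z = (K + 1 - z) mod 2" by simp
  also have "\<dots> = (if even z = even K then 1 else 0)"
    using assms(4) by presburger
  finally show ?thesis .
qed

text \<open>In both events the walk condition keeps every trajectory that started long enough ago
  (pullback) or below \<open>K + M\<close> at time 0 (forward) below \<open>K\<close> when it enters the descent block.\<close>

definition pullback_good :: "real \<Rightarrow> real \<Rightarrow> nat \<Rightarrow> noise \<Rightarrow> bool" where
  "pullback_good g1 g2 K q \<longleftrightarrow> (\<exists>r. r + int K + 1 \<le> 0 \<and>
      descent_block (birth_prob g1 g2 1) r (K + 1) q \<and>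
      (\<forall>u\<le>r. walk (birth_prob g1 g2 K) q u r \<le> 0) \<and>
      (\<forall>d. \<exists>s0. \<forall>s\<le>s0. walk (birth_prob g1 g2 K) q s r \<le> - d))"

definition forward_good :: "real \<Rightarrow> real \<Rightarrow> nat \<Rightarrow> nat \<Rightarrow> noise \<Rightarrow> bool" where
  "forward_good g1 g2 K M q \<longleftrightarrow> (\<exists>r::nat.
      descent_block (birth_prob g1 g2 1) (int r) (K + 1) q \<and>
      (\<forall>u\<in>{0..int r}. walk (birth_prob g1 g2 K) q u (int r) \<le> 0) \<and>
      int M + walk (birth_prob g1 g2 K) q 0 (int r) \<le> 0)"

definition pullback_limits :: "real \<Rightarrow> real \<Rightarrow> noise \<Rightarrow> nat \<Rightarrow> nat \<Rightarrow> bool" where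
  "pullback_limits g1 g2 q a0 a1 \<longleftrightarrow> (\<forall>y. eventually
      (\<lambda>s. phi g1 g2 s (shift (- int s) q) y = (if even (y + s) then a0 else a1)) sequentially)"

lemma phi_pullback_through_descent_block:
  assumes g: "g1 > 0" "g2 > 0" "K \<ge> 1" and q1: "\<forall>k. q k < 1" and r: "r + int K + 1 \<le> 0"
    and blk: "descent_block (birth_prob g1 g2 1) r (K + 1) q"
    and ladder: "\<forall>u\<le>r. walk (birth_prob g1 g2 K) q u r \<le> 0"
    and s: "- int s \<le> r" and y: "walk (birth_prob g1 g2 K) q (- int s) r \<le> - int y"
  shows "phi g1 g2 s (shift (- int s) q) y = phi g1 g2 (nat (- (r + int K + 1))) (shift (r + int K + 1) q)
    (if even (int y + int s + r) = even K then 1 else 0)"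
proof -
  let ?e = "birth_prob g1 g2 K" and ?q = "shift (- int s) q" and ?N = "nat (- (r + int K + 1))"
  define m where "m = nat (r + int s)"
  have m: "int m = r + int s" using s unfolding m_def by simp
  define z where "z = phi g1 g2 m ?q y"
  have s_eq: "s = m + (K + 1) + ?N" using m r by simp
  have "phi g1 g2 s ?q y = phi g1 g2 ?N (shift (int (m + (K + 1))) ?q) (phi g1 g2 (K + 1) (shift (int m) ?q) z)"
    unfolding s_eq z_def phi_add[of g1 g2 "m + (K + 1)" ?N] phi_add[of g1 g2 m "K + 1"] ..
  also have "shift (int (m + (K + 1))) ?q = shift (r + int K + 1) q"
    using m by (simp add: shift_add algebra_simps)
  also have "shift (int m) ?q = shift r q"
    using m by (simp add: shift_add)
  finally have "phi g1 g2 s ?q y = phi g1 g2 ?N (shift (r + int K + 1) q) (phi g1 g2 (K + 1) (shift r q) z)" .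
  moreover have "z \<le> K"
    unfolding z_def
  proof (rule phi_le_threshold[OF g])
    show "\<forall>u\<in>{0..int m}. walk ?e ?q u (int m) \<le> 0"
      using ladder m by (auto simp: walk_shift)
    show "excess K y + walk ?e ?q 0 (int m) \<le> 0"
      using y m by (simp add: walk_shift excess_def)
  qed
  moreover have "even z \<longleftrightarrow> even (int y + int m)"
    unfolding z_def using phi_parity[OF g(1)] q1 by (simp add: shift_apply)
  ultimately show ?thesis
    using phi_across_descent_block[OF g(1,2) blk] m by (simp add: ac_simps)
qed

lemma pullback_good_imp_limits:
  assumes g: "g1 > 0" "g2 > 0" "K \<ge> 1" and q1: "\<forall>k. q k < 1" and good: "pullback_good g1 g2 K q"
  shows "\<exists>a0 a1. pullback_limits g1 g2 q a0 a1"
proof -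
  obtain r where r: "r + int K + 1 \<le> 0"
    and blk: "descent_block (birth_prob g1 g2 1) r (K + 1) q"
    and ladder: "\<forall>u\<le>r. walk (birth_prob g1 g2 K) q u r \<le> 0"
    and drift: "\<forall>d. \<exists>s0. \<forall>s\<le>s0. walk (birth_prob g1 g2 K) q s r \<le> - d"
    using good unfolding pullback_good_def by blast
  define F where "F = phi g1 g2 (nat (- (r + int K + 1))) (shift (r + int K + 1) q)"
  have "pullback_limits g1 g2 q (F (if even K = even r then 1 else 0)) (F (if even K = even r then 0 else 1))"
    unfolding pullback_limits_def eventually_sequentially
  proof
    fix y
    obtain s0 where "\<forall>s\<le>s0. walk (birth_prob g1 g2 K) q s r \<le> - int y" using drift by blast
    then show "\<exists>S. \<forall>s\<ge>S. phi g1 g2 s (shift (- int s) q) y =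
        (if even (y + s) then F (if even K = even r then 1 else 0) else F (if even K = even r then 0 else 1))"
      using phi_pullback_through_descent_block[OF g q1 r blk ladder] unfolding F_def
      by (intro exI[of _ "nat (max (- s0) (- r))"]) (auto simp: even_add)
  qed
  then show ?thesis by blast
qed

lemma forward_good_imp_coalescence:
  assumes g: "g1 > 0" "g2 > 0" "K \<ge> 1" and q1: "\<forall>k. q k < 1" and good: "forward_good g1 g2 K M q"
  shows "\<exists>N. \<forall>n\<ge>N. \<forall>x x'. x \<le> K + M \<longrightarrow> x' \<le> K + M \<longrightarrow> even x = even x' \<longrightarrow>
           phi g1 g2 n q x = phi g1 g2 n q x'"
proof -
  let ?e = "birth_prob g1 g2 K"
  obtain r where blk: "descent_block (birth_prob g1 g2 1) (int r) (K + 1) q"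
    and ladder: "\<forall>u\<in>{0..int r}. walk ?e q u (int r) \<le> 0"
    and deep: "int M + walk ?e q 0 (int r) \<le> 0"
    using good unfolding forward_good_def by blast
  have collapsed: "phi g1 g2 (r + (K + 1)) q x = (if even (x + r) = even K then 1 else 0)"
    if "x \<le> K + M" for x
  proof -
    define z where "z = phi g1 g2 r q x"
    have "z \<le> K"
      unfolding z_def
    proof (rule phi_le_threshold[OF g ladder])
      show "excess K x + walk ?e q 0 (int r) \<le> 0"
        using that deep unfolding excess_def by simp
    qed
    moreover have "even z \<longleftrightarrow> even (x + r)"
      unfolding z_def using phi_parity[OF g(1) q1] by simp
    ultimately show ?thesis
      using phi_across_descent_block[OF g(1,2) blk] unfolding z_def phi_add[of g1 g2 r] by simp
  qed
  show ?thesis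
  proof (intro exI allI impI)
    fix n x x' assume n: "r + (K + 1) \<le> n" and "x \<le> K + M" "x' \<le> K + M" "even x = even x'"
    then have "phi g1 g2 (r + (K + 1)) q x = phi g1 g2 (r + (K + 1)) q x'"
      using collapsed by (simp add: even_add)
    moreover have "n = (r + (K + 1)) + (n - (r + (K + 1)))" using n by simp
    ultimately show "phi g1 g2 n q x = phi g1 g2 n q x'"
      by (metis phi_add)
  qed
qed

section \<open>The noise measure\<close>

definition uniform01 :: "real measure" where
  "uniform01 = restrict_space lborel {0..1}"

lemma Pn_eq_PiM: "Pn = PiM UNIV (\<lambda>_. uniform01)"
  unfolding Pn_def uniform01_def ..

lemma space_uniform01: "space uniform01 = {0..1}"
  unfolding uniform01_def by simp

lemma sets_uniform01_iff: "A \<in> sets uniform01 \<longleftrightarrow> A \<in> sets borel \<and> A \<subseteq> {0..1}"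
  unfolding uniform01_def by (auto simp: sets_restrict_space_iff)

lemma emeasure_uniform01: "A \<in> sets borel \<Longrightarrow> A \<subseteq> {0..1} \<Longrightarrow> emeasure uniform01 A = emeasure lborel A"
  unfolding uniform01_def by (subst emeasure_restrict_space) auto

lemma measure_uniform01_Ico: "0 \<le> a \<Longrightarrow> a \<le> b \<Longrightarrow> b \<le> 1 \<Longrightarrow> measure uniform01 {a..<b} = b - a"
  unfolding uniform01_def by (subst measure_restrict_space) auto

lemma Ico_in_sets_uniform01: "0 \<le> a \<Longrightarrow> b \<le> 1 \<Longrightarrow> {a..<b} \<in> sets uniform01"
  by (auto simp: sets_uniform01_iff)

lemma prob_space_uniform01: "prob_space uniform01"
  by standard (simp add: space_uniform01 emeasure_uniform01)

interpretation Pn_prod: product_prob_space "\<lambda>_::int. uniform01" UNIV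
  by (simp add: product_prob_space_def product_sigma_finite_def prob_space_uniform01
      prob_space_imp_sigma_finite product_prob_space_axioms_def)

lemma prob_space_Pn: "prob_space Pn"
  unfolding Pn_eq_PiM by (rule Pn_prod.P.prob_space_axioms)

lemma space_Pn: "space Pn = {q. \<forall>k. 0 \<le> q k \<and> q k \<le> 1}"
  unfolding Pn_eq_PiM by (auto simp: space_PiM space_uniform01 PiE_def Pi_def extensional_def)

lemma measurable_coord_uniform01: "(\<lambda>q. q k) \<in> measurable Pn uniform01"
  unfolding Pn_eq_PiM by simp

lemma measurable_coord [measurable]: "(\<lambda>q. q k) \<in> borel_measurable Pn"
proof -
  have "(\<lambda>x. x) \<in> borel_measurable uniform01"
    unfolding uniform01_def by (intro measurable_restrict_space1) simp
  then show ?thesis using measurable_coord_uniform01 by (rule measurable_compose[rotated])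
qed

lemma measurable_shift [measurable]: "shift k \<in> measurable Pn Pn"
proof -
  have "(\<lambda>q m. q (m + k)) \<in> measurable Pn (PiM UNIV (\<lambda>_. uniform01))"
    by (rule measurable_PiM_single')
      (auto simp: measurable_coord_uniform01 space_Pn space_uniform01)
  then show ?thesis unfolding shift_def[abs_def] Pn_eq_PiM .
qed

lemma measurable_phi [measurable]: "(\<lambda>q. phi g1 g2 n q x) \<in> measurable Pn (count_space UNIV)"
proof (induction n)
  case (Suc n)
  define f where "f = (\<lambda>i q. if q (int n) < g1 / (g1 + g2 * real i) then i + 1 else (i::nat) - 1)"
  have "(\<lambda>q. f i q) \<in> measurable Pn (count_space UNIV)" for i
    unfolding f_def by measurable
  from measurable_compose_countable[where f=f, OF this Suc]
  show ?case by (simp add: f_def fstep_def shift_apply)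
qed simp

lemma distr_shift_Pn: "distr Pn Pn (shift k) = Pn"
proof -
  have "distr (PiM UNIV (\<lambda>_::int. uniform01)) (PiM UNIV (\<lambda>i. uniform01)) (\<lambda>\<omega>. \<lambda>n\<in>UNIV. \<omega> (n + k))
      = PiM UNIV (\<lambda>i. uniform01)"
    using distr_PiM_reindex[of UNIV "\<lambda>_. uniform01" "\<lambda>n. n + k" UNIV] prob_space_uniform01
    by (simp add: inj_on_def)
  moreover have "(\<lambda>\<omega>. \<lambda>n\<in>UNIV. \<omega> (n + k)) = shift k"
    unfolding restrict_def shift_def by simp
  ultimately show ?thesis unfolding Pn_eq_PiM by simp
qed

lemma AE_shift:
  assumes "AE q in Pn. P q"
  shows "AE q in Pn. P (shift k q)"
proof -
  have "AE q in distr Pn Pn (shift k). P q" by (subst distr_shift_Pn) (rule assms)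
  then show ?thesis using AE_distrD[of "shift k" Pn Pn P] measurable_shift by auto
qed

lemma AE_noise_less_1: "AE q in Pn. \<forall>k. q k < 1"
proof (subst AE_all_countable, intro allI)
  fix k :: int
  have "emeasure Pn {q\<in>space Pn. q k \<in> {1}} = emeasure uniform01 {1}"
    unfolding Pn_eq_PiM by (rule Pn_prod.emeasure_PiM_Collect_single) (auto simp: sets_uniform01_iff)
  also have "\<dots> = 0" by (subst emeasure_uniform01) auto
  finally have "{q\<in>space Pn. q k \<in> {1}} \<in> null_sets Pn"
    by (auto simp: null_sets_def)
  then show "AE q in Pn. q k < 1"
    by (rule AE_I') (auto simp: space_Pn intro: antisym)
qed

lemma measure_Pn_cylinder:
  assumes "finite S" "\<And>k. k \<in> S \<Longrightarrow> X k \<in> sets uniform01"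
  shows "measure Pn {q\<in>space Pn. \<forall>k\<in>S. q k \<in> X k} = (\<Prod>k\<in>S. measure uniform01 (X k))"
proof -
  have fin: "finite_measure uniform01"
    using prob_space_uniform01 by (simp add: prob_space_def)
  have "emeasure Pn {q\<in>space Pn. \<forall>k\<in>S. q k \<in> X k} = (\<Prod>k\<in>S. emeasure uniform01 (X k))"
    unfolding Pn_eq_PiM using assms by (intro Pn_prod.emeasure_PiM_Collect) auto
  then show ?thesis
    by (simp add: Pn_eq_PiM Pn_prod.P.emeasure_eq_measure finite_measure.emeasure_eq_measure[OF fin]
        prod_ennreal measure_nonneg prod_nonneg)
qed

lemma indep_coords: "prob_space.indep_vars Pn (\<lambda>_. uniform01) (\<lambda>k q. q k) UNIV"
proof -
  interpret prob_space Pn by (rule prob_space_Pn)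
  have "distr Pn uniform01 (\<lambda>x. x i) = uniform01" for i
    unfolding Pn_eq_PiM by (rule Pn_prod.PiM_component) simp
  moreover have "distr Pn (PiM UNIV (\<lambda>_. uniform01)) (\<lambda>x. \<lambda>i\<in>UNIV. x i) = Pn"
    unfolding Pn_eq_PiM restrict_def by (simp add: distr_id2)
  ultimately show ?thesis
    by (subst indep_vars_iff_distr_eq_PiM') (auto simp: measurable_coord_uniform01 Pn_eq_PiM)
qed

lemma local_pred_eq_restrict_preimage:
  assumes P: "Measurable.pred Pn P"
    and local: "\<And>q q'. q \<in> space Pn \<Longrightarrow> q' \<in> space Pn \<Longrightarrow> (\<forall>k\<in>F. q k = q' k) \<Longrightarrow> P q = P q'"
  defines "X \<equiv> {x \<in> space (PiM F (\<lambda>_. uniform01)). P (\<lambda>k. if k \<in> F then x k else 0)}"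
  shows "X \<in> sets (PiM F (\<lambda>_. uniform01))"
    and "{q\<in>space Pn. P q} = (\<lambda>q. restrict q F) -` X \<inter> space Pn"
proof -
  have "(\<lambda>x k. if k \<in> F then x k else 0) \<in> measurable (PiM F (\<lambda>_. uniform01)) Pn"
    unfolding Pn_eq_PiM
  proof (rule measurable_PiM_single')
    show "(\<lambda>x. if k \<in> F then x k else 0) \<in> measurable (PiM F (\<lambda>_. uniform01)) uniform01" for k
      by (cases "k \<in> F") (auto simp: space_uniform01)
  qed (auto simp: space_PiM space_uniform01 PiE_def Pi_def)
  from measurable_compose[OF this P]
  show "X \<in> sets (PiM F (\<lambda>_. uniform01))"
    unfolding X_def by (simp add: pred_def)
  have "restrict q F \<in> space (PiM F (\<lambda>_. uniform01))" "P (\<lambda>k. if k \<in> F then restrict q F k else 0) = P q"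
    if q: "q \<in> space Pn" for q
  proof -
    show "restrict q F \<in> space (PiM F (\<lambda>_. uniform01))"
      using q by (auto simp: space_PiM space_Pn space_uniform01)
    show "P (\<lambda>k. if k \<in> F then restrict q F k else 0) = P q"
      using q by (intro local) (auto simp: space_Pn)
  qed
  then show "{q\<in>space Pn. P q} = (\<lambda>q. restrict q F) -` X \<inter> space Pn"
    unfolding X_def by auto
qed

lemma measure_Pn_conj_disjoint_coords:
  assumes F: "F1 \<inter> F2 = {}"
    and P1: "Measurable.pred Pn P1" and P2: "Measurable.pred Pn P2"
    and local1: "\<And>q q'. q \<in> space Pn \<Longrightarrow> q' \<in> space Pn \<Longrightarrow> (\<forall>k\<in>F1. q k = q' k) \<Longrightarrow> P1 q = P1 q'"
    and local2: "\<And>q q'. q \<in> space Pn \<Longrightarrow> q' \<in> space Pn \<Longrightarrow> (\<forall>k\<in>F2. q k = q' k) \<Longrightarrow> P2 q = P2 q'"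
  shows "measure Pn {q\<in>space Pn. P1 q \<and> P2 q} = measure Pn {q\<in>space Pn. P1 q} * measure Pn {q\<in>space Pn. P2 q}"
proof -
  interpret prob_space Pn by (rule prob_space_Pn)
  define I where "I = (\<lambda>b::bool. if b then F1 else F2)"
  define X where "X = (\<lambda>b. {x \<in> space (PiM (I b) (\<lambda>_. uniform01)).
    (if b then P1 else P2) (\<lambda>k. if k \<in> I b then x k else 0)})"
  define A where "A = (\<lambda>b. (\<lambda>q. restrict (\<lambda>i. q i) (I b)) -` X b \<inter> space Pn)"
  note preimage1 = local_pred_eq_restrict_preimage[OF P1 local1]
  note preimage2 = local_pred_eq_restrict_preimage[OF P2 local2]
  have indep: "indep_vars (\<lambda>b. PiM (I b) (\<lambda>_. uniform01)) (\<lambda>b q. restrict (\<lambda>i. q i) (I b)) UNIV"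
    by (rule indep_vars_restrict[OF indep_coords]) (use F in \<open>auto simp: disjoint_family_on_def I_def\<close>)
  have X_sets: "X b \<in> sets (PiM (I b) (\<lambda>_. uniform01))" for b
    by (cases b) (simp_all only: X_def I_def if_True if_False preimage1(1) preimage2(1))
  have "prob (\<Inter>b\<in>UNIV. A b) = (\<Prod>b\<in>UNIV. prob (A b))"
    unfolding A_def by (rule indep_varsD[OF indep]) (simp_all add: X_sets)
  moreover have "(\<Inter>b\<in>UNIV. A b) = A True \<inter> A False" "(\<Prod>b\<in>UNIV. prob (A b)) = prob (A True) * prob (A False)"
    by (auto simp: UNIV_bool)
  moreover have "{q\<in>space Pn. P1 q} = A True"
    unfolding A_def X_def I_def if_True if_False by (rule preimage1(2))
  moreover have "{q\<in>space Pn. P2 q} = A False"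
    unfolding A_def X_def I_def if_True if_False by (rule preimage2(2))
  moreover have "{q\<in>space Pn. P1 q} \<inter> {q\<in>space Pn. P2 q} = {q\<in>space Pn. P1 q \<and> P2 q}"
    by blast
  ultimately show ?thesis by simp
qed

section \<open>Large deviations of the walk\<close>

lemma measurable_walk [measurable]: "(\<lambda>q. real_of_int (walk e q a b)) \<in> borel_measurable Pn"
proof -
  have "real_of_int (walk e q a b) = (\<Sum>k\<in>{a..<b}. (if q k < e then 1 else -1 :: real))" for q
    unfolding walk_def walk_incr_def of_int_sum by (intro sum.cong) auto
  then show ?thesis by simp
qed

lemma pred_walk_le [measurable]: "Measurable.pred Pn (\<lambda>q. walk e q a b \<le> z)"
proof -
  have "Measurable.pred Pn (\<lambda>q. real_of_int (walk e q a b) \<le> real_of_int z)" by measurable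
  then show ?thesis by simp
qed

lemma pred_walk_less [measurable]: "Measurable.pred Pn (\<lambda>q. z < walk e q a b)"
proof -
  have "Measurable.pred Pn (\<lambda>q. real_of_int z < real_of_int (walk e q a b))" by measurable
  then show ?thesis by simp
qed

lemma pred_walk_ge [measurable]: "Measurable.pred Pn (\<lambda>q. z \<le> n * walk e q a b)"
proof -
  have "Measurable.pred Pn (\<lambda>q. real_of_int z \<le> real_of_int n * real_of_int (walk e q a b))"
    by measurable
  then show ?thesis by (simp only: of_int_mult[symmetric] of_int_le_iff)
qed

lemma walk_eq_up_count: "walk e q a (a + int m) = 2 * int (card {k\<in>{a..<a + int m}. q k < e}) - int m"
proof (induction m)
  case (Suc m)
  let ?U = "{k\<in>{a..<a + int m}. q k < e}"
  have "{a..<a + int (Suc m)} = insert (a + int m) {a..<a + int m}" by auto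
  then have "{k\<in>{a..<a + int (Suc m)}. q k < e} = (if q (a + int m) < e then insert (a + int m) ?U else ?U)"
    by auto
  moreover have "finite ?U" by (rule finite_subset[of _ "{a..<a + int m}"]) auto
  moreover have "a + int m \<notin> ?U" by simp
  moreover have "walk e q a (a + int (Suc m)) = walk e q a (a + int m) + walk_incr e (q (a + int m))"
    using walk_snoc[of a "a + int m" e q] by (simp add: ac_simps)
  ultimately show ?case using Suc by (simp add: walk_incr_def)
qed (simp add: walk_def)

lemma measure_Pn_all_below:
  assumes "finite S" "0 \<le> e" "e \<le> 1"
  shows "measure Pn {q\<in>space Pn. \<forall>k\<in>S. q k \<in> {0..<e}} = e ^ card S"
  using measure_Pn_cylinder[OF assms(1), of "\<lambda>_. {0..<e}"] assms
  by (simp add: measure_uniform01_Ico Ico_in_sets_uniform01)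

lemma binomial_times_small_power_le:
  fixes e :: real
  assumes "0 \<le> e" "e \<le> 1/4096"
  shows "real (m choose ((m + 3) div 4)) * e ^ ((m + 3) div 4) \<le> (1/4) ^ m"
proof -
  define j where "j = (m + 3) div 4"
  have "real (m choose j) * e ^ j \<le> 2 ^ m * (1/8) ^ m"
  proof (rule mult_mono)
    show "real (m choose j) \<le> 2 ^ m"
      using binomial_le_pow2[of m j] by (simp add: of_nat_le_iff[symmetric])
    have "e ^ j \<le> (1/4096) ^ j" using assms by (intro power_mono) auto
    also have "(1/4096::real) ^ j = (1/8) ^ (4 * j)" by (simp add: power_mult power_divide)
    also have "\<dots> \<le> (1/8) ^ m" unfolding j_def by (intro power_decreasing) auto
    finally show "e ^ j \<le> (1/8) ^ m" .
  qed (use assms in auto)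
  also have "\<dots> = (1/4) ^ m" by (simp add: power_mult_distrib[symmetric])
  finally show ?thesis unfolding j_def .
qed

text \<open>To end above \<open>-m/2\<close> after \<open>m\<close> steps, the walk with up-probability at most \<open>1/4096\<close>
  has to step up at least \<open>m/4\<close> times; a union bound over the possible sets of \<open>\<lceil>m/4\<rceil>\<close>
  up-steps gives \<open>2^m (1/4096)^(m/4) = 4^-m\<close>.\<close>

lemma measure_walk_ge_neg_half:
  assumes e: "0 \<le> e" "e \<le> 1/4096"
  shows "measure Pn {q\<in>space Pn. - int m \<le> 2 * walk e q a (a + int m)} \<le> (1/4) ^ m"
proof -
  interpret prob_space Pn by (rule prob_space_Pn)
  define j where "j = (m + 3) div 4"
  define W where "W = {a..<a + int m}"
  define Sub where "Sub = {S. S \<subseteq> W \<and> card S = j}"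
  define R where "R = (\<lambda>S. {q\<in>space Pn. \<forall>k\<in>S. q k \<in> {0..<e}})"
  have fin_Sub: "finite Sub" "card Sub = m choose j"
    unfolding Sub_def W_def using n_subsets[of "{a..<a + int m}" j]
    by (auto intro: finite_subset[of _ "Pow {a..<a + int m}"])
  have fin_S: "finite S" "card S = j" if "S \<in> Sub" for S
    using that unfolding Sub_def W_def by (auto intro: finite_subset)
  then have R_sets: "R S \<in> sets Pn" if "S \<in> Sub" for S
    using that unfolding R_def by measurable
  have "{q\<in>space Pn. - int m \<le> 2 * walk e q a (a + int m)} \<subseteq> (\<Union>S\<in>Sub. R S)"
  proof
    fix q assume q: "q \<in> {q\<in>space Pn. - int m \<le> 2 * walk e q a (a + int m)}"
    then have "m \<le> 4 * card {k \<in> W. q k < e}"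
      unfolding walk_eq_up_count W_def by simp
    then have "j \<le> card {k \<in> W. q k < e}"
      unfolding j_def by linarith
    then obtain S where "S \<subseteq> {k \<in> W. q k < e}" "card S = j" "finite S"
      by (rule obtain_subset_with_card_n)
    then have "q \<in> R S" "S \<in> Sub" using q unfolding R_def Sub_def by (auto simp: space_Pn)
    then show "q \<in> (\<Union>S\<in>Sub. R S)" by blast
  qed
  then have "measure Pn {q\<in>space Pn. - int m \<le> 2 * walk e q a (a + int m)} \<le> measure Pn (\<Union>S\<in>Sub. R S)"
    using R_sets fin_Sub by (intro finite_measure_mono) auto
  also have "\<dots> \<le> (\<Sum>S\<in>Sub. measure Pn (R S))"
    using R_sets fin_Sub by (intro measure_UNION_le) auto
  also have "\<dots> = real (m choose j) * e ^ j"
    using measure_Pn_all_below[OF fin_S(1)] fin_S(2) fin_Sub e unfolding R_def by simp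
  also have "\<dots> \<le> (1/4) ^ m"
    unfolding j_def by (rule binomial_times_small_power_le[OF e])
  finally show ?thesis .
qed

lemma measure_walk_exceeds:
  assumes "0 \<le> e" "e \<le> 1/4096"
  shows "measure Pn {q\<in>space Pn. int d < walk e q a (a + int m)} \<le> (1/2) ^ m * (1/2) ^ d"
proof (cases "m \<le> d")
  case True
  have "\<not> int d < walk e q a (a + int m)" for q
    using walk_le_length[of a "a + int m" e q] True by simp
  then show ?thesis by simp
next
  case False
  interpret prob_space Pn by (rule prob_space_Pn)
  have "measure Pn {q\<in>space Pn. int d < walk e q a (a + int m)}
      \<le> measure Pn {q\<in>space Pn. - int m \<le> 2 * walk e q a (a + int m)}"
    by (intro finite_measure_mono) auto
  also have "\<dots> \<le> (1/4) ^ m" by (rule measure_walk_ge_neg_half[OF assms])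
  also have "\<dots> = (1/2) ^ m * (1/2) ^ m" by (simp add: power_mult_distrib[symmetric])
  also have "\<dots> \<le> (1/2) ^ m * (1/2) ^ d"
    using False by (intro mult_left_mono power_decreasing) auto
  finally show ?thesis .
qed

lemma measure_walk_sup_exceeds:
  assumes e: "0 \<le> e" "e \<le> 1/4096"
  shows "measure Pn {q\<in>space Pn. \<exists>u<b. int H < walk e q u b} \<le> (1/2) ^ H"
proof -
  interpret prob_space Pn by (rule prob_space_Pn)
  define A where "A = (\<lambda>m::nat. {q\<in>space Pn. int H < walk e q (b - int (Suc m)) b})"
  have A_sets: "A m \<in> sets Pn" for m unfolding A_def by measurable
  have measure_A: "measure Pn (A m) \<le> (1/2) ^ Suc m * (1/2) ^ H" for m
    using measure_walk_exceeds[OF e, of H "b - int (Suc m)" "Suc m"] unfolding A_def by simp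
  have geometric: "(\<lambda>m. (1/2::real) ^ Suc m * (1/2) ^ H) sums (1/2) ^ H"
    using sums_mult2[OF power_half_series] by simp
  have summable_A: "summable (\<lambda>m. measure Pn (A m))"
    by (rule summable_comparison_test[OF _ sums_summable[OF geometric]]) (use measure_A in auto)
  have "{q\<in>space Pn. \<exists>u<b. int H < walk e q u b} = (\<Union>m. A m)"
  proof (intro set_eqI iffI)
    fix q assume "q \<in> {q\<in>space Pn. \<exists>u<b. int H < walk e q u b}"
    then obtain u where "q \<in> space Pn" "u < b" "int H < walk e q u b" by auto
    moreover have "b - int (Suc (nat (b - u - 1))) = u" using \<open>u < b\<close> by simp
    ultimately have "q \<in> A (nat (b - u - 1))" unfolding A_def by simp
    then show "q \<in> (\<Union>m. A m)" by blast
  qed (force simp: A_def)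
  moreover have "measure Pn (\<Union>m. A m) \<le> (\<Sum>m. measure Pn (A m))"
    using A_sets summable_A by (intro finite_measure_subadditive_countably) auto
  ultimately have "measure Pn {q\<in>space Pn. \<exists>u<b. int H < walk e q u b} \<le> (\<Sum>m. measure Pn (A m))"
    by simp
  also have "\<dots> \<le> (1/2) ^ H"
    using suminf_le[OF measure_A summable_A sums_summable[OF geometric]] geometric
    by (simp add: sums_iff)
  finally show ?thesis .
qed

lemma AE_walk_drift:
  assumes e: "0 \<le> e" "e \<le> 1/4096"
  shows "AE q in Pn. \<forall>r d. \<exists>s0. \<forall>s\<le>s0. walk e q s r \<le> - d"
proof (subst AE_all_countable, intro allI)
  fix r
  interpret prob_space Pn by (rule prob_space_Pn)
  define A where "A = (\<lambda>m::nat. {q\<in>space Pn. - int m \<le> 2 * walk e q (r - int m) r})"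
  have A_sets: "A m \<in> sets Pn" for m unfolding A_def by measurable
  have "measure Pn (A m) \<le> (1/4) ^ m" for m
    using measure_walk_ge_neg_half[OF e, of m "r - int m"] unfolding A_def by simp
  then have "summable (\<lambda>m. measure Pn (A m))"
    by (intro summable_comparison_test'[OF summable_geometric[of "1/4::real"]]) auto
  then have "AE q in Pn. eventually (\<lambda>m. q \<in> space Pn - A m) sequentially"
    by (intro borel_cantelli_AE1[OF A_sets]) (auto simp: emeasure_eq_measure)
  then show "AE q in Pn. \<forall>d. \<exists>s0. \<forall>s\<le>s0. walk e q s r \<le> - d"
  proof (rule AE_mp, intro AE_I2 impI allI)
    fix q d assume q: "q \<in> space Pn" and "eventually (\<lambda>m. q \<in> space Pn - A m) sequentially"
    then obtain m0 where m0: "\<And>m. m \<ge> m0 \<Longrightarrow> q \<notin> A m" unfolding eventually_sequentially by blast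
    show "\<exists>s0. \<forall>s\<le>s0. walk e q s r \<le> - d"
    proof (intro exI allI impI)
      fix s assume s: "s \<le> r - int m0 - 2 * \<bar>d\<bar> - 1"
      define m where "m = nat (r - s)"
      have "m \<ge> m0" "r - int m = s" "int m > 2 * \<bar>d\<bar>" using s unfolding m_def by auto
      then show "walk e q s r \<le> - d" using m0[of m] q unfolding A_def by auto
    qed
  qed
qed

section \<open>Good noise is almost sure\<close>

lemma pred_descent_block [measurable]: "Measurable.pred Pn (descent_block c a L)"
  unfolding descent_block_def by measurable

lemma measure_descent_block:
  assumes "0 \<le> c" "c \<le> 1"
  shows "measure Pn {q\<in>space Pn. descent_block c a L q} = (1 - c) ^ L"
proof -
  have "{q\<in>space Pn. descent_block c a L q} = {q\<in>space Pn. \<forall>k\<in>{a..<a + int L}. q k \<in> {c..<1}}"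
    unfolding descent_block_def by auto
  also have "measure Pn \<dots> = (\<Prod>k\<in>{a..<a + int L}. measure uniform01 {c..<1})"
    using assms by (intro measure_Pn_cylinder) (auto intro!: Ico_in_sets_uniform01)
  also have "\<dots> = (1 - c) ^ L" using assms by (simp add: measure_uniform01_Ico)
  finally show ?thesis .
qed

lemma descent_block_mono:
  "descent_block c a L q \<Longrightarrow> a \<le> a' \<Longrightarrow> a' + int L' \<le> a + int L \<Longrightarrow> descent_block c a' L' q"
  unfolding descent_block_def by auto

lemma local_descent_block:
  "(\<forall>k\<in>{a..<a + int L}. q k = q' k) \<Longrightarrow> descent_block c a L q = descent_block c a L q'"
  unfolding descent_block_def by auto

lemma measure_no_descent_block:
  assumes c: "0 \<le> c" "c \<le> 1" and sep: "\<And>i j. i < j \<Longrightarrow> p j + int L \<le> p i"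
  shows "measure Pn {q\<in>space Pn. \<forall>i<n. \<not> descent_block c (p i) L q} = (1 - (1 - c) ^ L) ^ n"
proof (induction n)
  case 0
  then show ?case using prob_space.prob_space[OF prob_space_Pn] by simp
next
  case (Suc n)
  interpret prob_space Pn by (rule prob_space_Pn)
  have "measure Pn {q\<in>space Pn. (\<forall>i<n. \<not> descent_block c (p i) L q) \<and> \<not> descent_block c (p n) L q} =
        measure Pn {q\<in>space Pn. \<forall>i<n. \<not> descent_block c (p i) L q} *
        measure Pn {q\<in>space Pn. \<not> descent_block c (p n) L q}"
  proof (rule measure_Pn_conj_disjoint_coords[where ?F1.0="{p n + int L..}" and ?F2.0="{p n..<p n + int L}"])
    show "(\<forall>i<n. \<not> descent_block c (p i) L q) = (\<forall>i<n. \<not> descent_block c (p i) L q')"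
      if "\<forall>k\<in>{p n + int L..}. q k = q' k" for q q'
      using that sep by (intro all_cong local_descent_block[THEN arg_cong]) fastforce
    show "(\<not> descent_block c (p n) L q) = (\<not> descent_block c (p n) L q')"
      if "\<forall>k\<in>{p n..<p n + int L}. q k = q' k" for q q'
      using local_descent_block[OF that] by simp
  qed auto
  moreover have "{q\<in>space Pn. \<forall>i<Suc n. \<not> descent_block c (p i) L q} =
      {q\<in>space Pn. (\<forall>i<n. \<not> descent_block c (p i) L q) \<and> \<not> descent_block c (p n) L q}"
    by (auto simp: less_Suc_eq)
  moreover have "{q\<in>space Pn. \<not> descent_block c (p n) L q} = space Pn - {q\<in>space Pn. descent_block c (p n) L q}"
    by auto
  moreover have "{q\<in>space Pn. descent_block c (p n) L q} \<in> sets Pn"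
    by measurable
  ultimately show ?case using Suc measure_descent_block[OF c, of "p n" L] prob_compl by simp
qed

lemma no_confirmed_candidate_subset:
  fixes B S :: "nat \<Rightarrow> 'a \<Rightarrow> bool"
  shows "{x\<in>X. \<not> (\<exists>j<J. B j x \<and> S j x)} \<subseteq>
    {x\<in>X. \<forall>j<J. \<not> B j x} \<union> (\<Union>j<J. {x\<in>X. (B j x \<and> (\<forall>i<j. \<not> B i x)) \<and> \<not> S j x})"
proof
  fix x assume x: "x \<in> {x\<in>X. \<not> (\<exists>j<J. B j x \<and> S j x)}"
  show "x \<in> {x\<in>X. \<forall>j<J. \<not> B j x} \<union> (\<Union>j<J. {x\<in>X. (B j x \<and> (\<forall>i<j. \<not> B i x)) \<and> \<not> S j x})"
  proof (cases "\<exists>j<J. B j x")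
    case True
    define j where "j = (LEAST j. B j x)"
    have "B j x" unfolding j_def using True by (metis LeastI)
    moreover have "j < J" using True unfolding j_def by (metis Least_le order.strict_trans1)
    moreover have "\<forall>i<j. \<not> B i x" unfolding j_def using not_less_Least by blast
    ultimately show ?thesis using x by auto
  qed (use x in auto)
qed

lemma (in prob_space) prob_no_confirmed_candidate_le:
  fixes B S :: "nat \<Rightarrow> 'a \<Rightarrow> bool"
  assumes B_pred [measurable]: "\<And>j. Measurable.pred M (B j)"
    and S_pred [measurable]: "\<And>j. Measurable.pred M (S j)"
    and none: "prob {x\<in>space M. \<forall>j<J. \<not> B j x} \<le> \<beta>"
    and first: "\<And>j. j < J \<Longrightarrow> prob {x\<in>space M. (B j x \<and> (\<forall>i<j. \<not> B i x)) \<and> \<not> S j x} \<le>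
        prob {x\<in>space M. B j x \<and> (\<forall>i<j. \<not> B i x)} * \<eta>"
    and "\<eta> \<ge> 0"
  shows "prob {x\<in>space M. \<not> (\<exists>j<J. B j x \<and> S j x)} \<le> \<beta> + \<eta>"
proof -
  define E where "E = (\<lambda>j. {x\<in>space M. B j x \<and> (\<forall>i<j. \<not> B i x)})"
  define E' where "E' = (\<lambda>j. {x\<in>space M. (B j x \<and> (\<forall>i<j. \<not> B i x)) \<and> \<not> S j x})"
  have [measurable]: "E j \<in> sets M" "E' j \<in> sets M" for j
    unfolding E_def E'_def by measurable
  have "{x\<in>space M. \<not> (\<exists>j<J. B j x \<and> S j x)} \<subseteq> {x\<in>space M. \<forall>j<J. \<not> B j x} \<union> (\<Union>j<J. E' j)"
    unfolding E'_def by (rule no_confirmed_candidate_subset)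
  then have "prob {x\<in>space M. \<not> (\<exists>j<J. B j x \<and> S j x)} \<le> prob ({x\<in>space M. \<forall>j<J. \<not> B j x} \<union> (\<Union>j<J. E' j))"
    by (intro finite_measure_mono) auto
  also have "\<dots> \<le> prob {x\<in>space M. \<forall>j<J. \<not> B j x} + prob (\<Union>j<J. E' j)"
    by (intro measure_Un_le) auto
  also have "prob (\<Union>j<J. E' j) \<le> (\<Sum>j<J. prob (E' j))"
    by (intro measure_UNION_le) auto
  also have "\<dots> \<le> (\<Sum>j<J. prob (E j) * \<eta>)"
    using first unfolding E_def E'_def by (intro sum_mono) auto
  also have "\<dots> = prob (\<Union>j<J. E j) * \<eta>"
  proof -
    have "disjoint_family_on E {..<J}"
      unfolding disjoint_family_on_def E_def by (auto, metis linorder_neqE_nat)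
    then show ?thesis by (subst measure_finite_Union) (auto simp: sum_distrib_right)
  qed
  also have "\<dots> \<le> 1 * \<eta>"
    using \<open>\<eta> \<ge> 0\<close> by (intro mult_right_mono) auto
  finally show ?thesis using none by simp
qed

lemma descent_blocks_leftwards:
  fixes b :: int and L :: nat
  defines "p \<equiv> \<lambda>j. b - int (Suc j) * int L"
  shows descent_blocks_leftwards_sep: "i < j \<Longrightarrow> p j + int L \<le> p i"
    and descent_blocks_leftwards_inside: "i \<le> j \<Longrightarrow> {p i..<p i + int L} \<subseteq> {p j..<b}"
proof -
  show "p j + int L \<le> p i" if "i < j"
  proof -
    have "int L * int (Suc i) \<le> int L * int j" using that by (intro mult_left_mono) auto
    then show ?thesis unfolding p_def by (simp add: algebra_simps)
  qed
  show "{p i..<p i + int L} \<subseteq> {p j..<b}" if "i \<le> j"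
  proof -
    have "int L * int i \<le> int L * int j" using that by (intro mult_left_mono) auto
    then show ?thesis unfolding p_def by (auto simp: algebra_simps)
  qed
qed

text \<open>Whether block \<open>j\<close> is the first descent block met when scanning leftwards from \<open>b\<close>
  depends only on the noise in \<open>[p j, b)\<close>, the walk condition only on the noise left of
  \<open>p j\<close>.\<close>

lemma measure_first_descent_block_and_high_walk:
  fixes b :: int and L H j :: nat and c e :: real
  defines "p \<equiv> \<lambda>j. b - int (Suc j) * int L"
  defines "first \<equiv> \<lambda>q. descent_block c (p j) L q \<and> (\<forall>i<j. \<not> descent_block c (p i) L q)"
    and "high \<equiv> \<lambda>q. \<exists>u<p j. int H < walk e q u (p j)"
  shows "measure Pn {q\<in>space Pn. first q \<and> high q} = measure Pn {q\<in>space Pn. first q} * measure Pn {q\<in>space Pn. high q}"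
proof (rule measure_Pn_conj_disjoint_coords[where ?F1.0="{p j..<b}" and ?F2.0="{..<p j}"])
  show "first q = first q'" if "\<forall>k\<in>{p j..<b}. q k = q' k" for q q'
  proof -
    have "descent_block c (p i) L q = descent_block c (p i) L q'" if "i \<le> j" for i
    proof -
      have "{p i..<p i + int L} \<subseteq> {p j..<b}"
        unfolding p_def by (rule descent_blocks_leftwards_inside[OF that])
      then show ?thesis using \<open>\<forall>k\<in>{p j..<b}. q k = q' k\<close> by (intro local_descent_block) auto
    qed
    then show ?thesis unfolding first_def by auto
  qed
  show "high q = high q'" if "\<forall>k\<in>{..<p j}. q k = q' k" for q q'
  proof -
    have "walk e q u (p j) = walk e q' u (p j)" for u
      using that by (intro walk_cong) auto
    then show ?thesis unfolding high_def by simp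
  qed
qed (auto simp: first_def high_def)

lemma measure_no_descent_block_after_low_walk:
  fixes b :: int and L H J :: nat
  assumes e: "0 \<le> e" "e \<le> 1/4096" and c: "0 \<le> c" "c \<le> 1"
  defines "p \<equiv> \<lambda>j. b - int (Suc j) * int L"
  shows "measure Pn {q\<in>space Pn. \<not> (\<exists>j<J. descent_block c (p j) L q \<and> (\<forall>u<p j. walk e q u (p j) \<le> int H))}
    \<le> (1 - (1 - c) ^ L) ^ J + (1/2) ^ H"
proof (rule prob_space.prob_no_confirmed_candidate_le[OF prob_space_Pn])
  show "measure Pn {q\<in>space Pn. \<forall>j<J. \<not> descent_block c (p j) L q} \<le> (1 - (1 - c) ^ L) ^ J"
    unfolding p_def by (intro measure_no_descent_block[OF c] descent_blocks_leftwards_sep eq_refl)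
  fix j
  let ?first = "\<lambda>q. descent_block c (p j) L q \<and> (\<forall>i<j. \<not> descent_block c (p i) L q)"
  have "measure Pn {q\<in>space Pn. ?first q \<and> \<not> (\<forall>u<p j. walk e q u (p j) \<le> int H)}
      = measure Pn {q\<in>space Pn. ?first q} * measure Pn {q\<in>space Pn. \<exists>u<p j. int H < walk e q u (p j)}"
    using measure_first_descent_block_and_high_walk[where b=b and L=L and j=j and c=c and H=H and e=e] unfolding p_def by (simp add: not_le)
  also have "\<dots> \<le> measure Pn {q\<in>space Pn. ?first q} * (1/2) ^ H"
    using measure_walk_sup_exceeds[OF e] by (intro mult_left_mono) auto
  finally show "measure Pn {q\<in>space Pn. ?first q \<and> \<not> (\<forall>u<p j. walk e q u (p j) \<le> int H)}
      \<le> measure Pn {q\<in>space Pn. ?first q} * (1/2) ^ H" .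
qed auto

lemma nonpos_if_le_power_plus_half_power:
  fixes x :: real and a :: "nat \<Rightarrow> real"
  assumes le: "\<And>H J. x \<le> a H ^ J + (1/2) ^ H" and a: "\<And>H. 0 \<le> a H" "\<And>H. a H < 1"
  shows "x \<le> 0"
proof -
  have "x \<le> (1/2) ^ H" for H
  proof (rule LIMSEQ_le_const)
    have "norm (a H) < 1" using a[of H] by simp
    from tendsto_add[OF LIMSEQ_power_zero[OF this] tendsto_const[of "(1/2::real) ^ H"]]
    show "(\<lambda>J. a H ^ J + (1/2) ^ H) \<longlonglongrightarrow> (1/2) ^ H" by simp
  qed (use le in blast)
  then show ?thesis
    by (intro LIMSEQ_le_const[OF LIMSEQ_power_zero[of "1/2::real"]]) auto
qed

lemma AE_descent_block_after_low_walk: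
  fixes b :: "nat \<Rightarrow> nat \<Rightarrow> int" and L :: "nat \<Rightarrow> nat"
  assumes e: "0 \<le> e" "e \<le> 1/4096" and c: "0 \<le> c" "c < 1"
  shows "AE q in Pn. \<exists>H J. \<exists>j<J. let p = b H J - int (Suc j) * int (L H) in
           descent_block c p (L H) q \<and> (\<forall>u<p. walk e q u p \<le> int H)"
proof -
  define N where "N = (\<lambda>H J. {q\<in>space Pn. \<not> (\<exists>j<J. let p = b H J - int (Suc j) * int (L H) in
           descent_block c p (L H) q \<and> (\<forall>u<p. walk e q u p \<le> int H))})"
  define N0 where "N0 = (\<Inter>H. \<Inter>J. N H J)"
  have N_sets: "N H J \<in> sets Pn" for H J unfolding N_def Let_def by measurable
  then have N0_sets: "N0 \<in> sets Pn" unfolding N0_def by auto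
  have "measure Pn N0 \<le> 0"
  proof (rule nonpos_if_le_power_plus_half_power)
    fix H J
    have "measure Pn N0 \<le> measure Pn (N H J)"
      using N_sets N0_sets unfolding N0_def
      by (intro finite_measure.finite_measure_mono[OF prob_space.finite_measure[OF prob_space_Pn]]) auto
    also have "\<dots> \<le> (1 - (1 - c) ^ L H) ^ J + (1/2) ^ H"
      unfolding N_def Let_def using c by (intro measure_no_descent_block_after_low_walk[OF e]) auto
    finally show "measure Pn N0 \<le> (1 - (1 - c) ^ L H) ^ J + (1/2) ^ H" .
  next
    fix H
    have "0 < (1 - c) ^ L H" "(1 - c) ^ L H \<le> 1" using c by (auto intro: power_le_one)
    then show "0 \<le> 1 - (1 - c) ^ L H" "1 - (1 - c) ^ L H < 1" by auto
  qed
  then have "N0 \<in> null_sets Pn"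
    using N0_sets measure_nonneg[of Pn N0]
    by (auto simp: finite_measure.emeasure_eq_measure[OF prob_space.finite_measure[OF prob_space_Pn]])
  then show ?thesis
    by (rule AE_I') (auto simp: N0_def N_def)
qed

lemma walk_across_descent_block:
  assumes "e \<le> c" "descent_block c p L q" "\<forall>u<p. walk e q u p \<le> int H" "p \<le> r" "r \<le> p + int L"
  shows "u \<le> p \<Longrightarrow> walk e q u r \<le> int H + p - r"
    and "p \<le> u \<Longrightarrow> u \<le> r \<Longrightarrow> walk e q u r = u - r"
proof -
  have descent: "walk e q u r = u - r" if "p \<le> u" "u \<le> r" for u
  proof (rule walk_descent[OF \<open>u \<le> r\<close>], intro ballI)
    fix k assume "k \<in> {u..<r}"
    then have "k \<in> {p..<p + int L}" using that assms(5) by auto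
    then show "e \<le> q k" using assms(1,2) unfolding descent_block_def by force
  qed
  then show "p \<le> u \<Longrightarrow> u \<le> r \<Longrightarrow> walk e q u r = u - r" .
  assume "u \<le> p"
  then show "walk e q u r \<le> int H + p - r"
  proof (cases "u = p")
    case False
    then have "walk e q u r = walk e q u p + walk e q p r"
      using \<open>u \<le> p\<close> assms(4) by (intro walk_split) auto
    then show ?thesis using assms(3,4) descent[of p] \<open>u \<le> p\<close> False by simp
  qed (use descent assms(4) in simp)
qed

text \<open>Blocks have length \<open>H + K + 1\<close> (pullback, left of 0) or \<open>H + M + K + 1\<close> (forward,
  right of 0): on the first \<open>H\<close> (resp. \<open>H + M\<close>) steps of such a block the walk descends by
  that amount, compensating the excess \<open>H\<close> of the walk arriving from the left, and the last
  \<open>K + 1\<close> steps form the required descent block.\<close>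

lemma AE_pullback_good:
  assumes g: "g1 > 0" "g2 > 0" "K \<ge> 1" and small: "birth_prob g1 g2 K \<le> 1/4096"
  shows "AE q in Pn. pullback_good g1 g2 K q"
proof -
  define e where "e = birth_prob g1 g2 K"
  define c where "c = birth_prob g1 g2 1"
  have ec: "0 \<le> e" "e \<le> 1/4096" "e \<le> c" "0 \<le> c" "c < 1"
    using birth_prob_bounds[OF g] small unfolding e_def c_def by auto
  have "AE q in Pn. \<exists>H J. \<exists>j<J. let p = 0 - int (Suc j) * int (H + K + 1) in
           descent_block c p (H + K + 1) q \<and> (\<forall>u<p. walk e q u p \<le> int H)"
    by (rule AE_descent_block_after_low_walk[OF ec(1,2,4,5)])
  moreover have "AE q in Pn. \<forall>r d. \<exists>s0. \<forall>s\<le>s0. walk e q s r \<le> - d"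
    by (rule AE_walk_drift[OF ec(1,2)])
  ultimately show ?thesis
  proof eventually_elim
    case (elim q)
    then obtain H j p where p: "p = 0 - int (Suc j) * int (H + K + 1)"
      and blk: "descent_block c p (H + K + 1) q" and low: "\<forall>u<p. walk e q u p \<le> int H"
      unfolding Let_def by blast
    have "p + int (H + K + 1) = - (int j * int (H + K + 1))" unfolding p by (simp add: algebra_simps)
    then have "p + int (H + K + 1) \<le> 0" by simp
    note across = walk_across_descent_block[OF ec(3) blk low, of "p + int H"]
    show ?case
      unfolding pullback_good_def c_def[symmetric] e_def[symmetric]
    proof (intro exI[of _ "p + int H"] conjI)
      show "p + int H + int K + 1 \<le> 0" using \<open>p + _ \<le> 0\<close> by simp
      show "descent_block c (p + int H) (K + 1) q"
        using blk by (rule descent_block_mono) auto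
      show "\<forall>u\<le>p + int H. walk e q u (p + int H) \<le> 0"
      proof (intro allI impI)
        fix u assume "u \<le> p + int H"
        then show "walk e q u (p + int H) \<le> 0"
          using across(1)[of u] across(2)[of u] by (cases "u \<le> p") simp_all
      qed
      show "\<forall>d. \<exists>s0. \<forall>s\<le>s0. walk e q s (p + int H) \<le> - d"
        using elim(2) by blast
    qed
  qed
qed

lemma AE_forward_good:
  assumes g: "g1 > 0" "g2 > 0" "K \<ge> 1" and small: "birth_prob g1 g2 K \<le> 1/4096"
  shows "AE q in Pn. forward_good g1 g2 K M q"
proof -
  define e where "e = birth_prob g1 g2 K"
  define c where "c = birth_prob g1 g2 1"
  have ec: "0 \<le> e" "e \<le> 1/4096" "e \<le> c" "0 \<le> c" "c < 1"
    using birth_prob_bounds[OF g] small unfolding e_def c_def by auto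
  have "AE q in Pn. \<exists>H J. \<exists>j<J. let p = int J * int (H + M + K + 1) - int (Suc j) * int (H + M + K + 1) in
           descent_block c p (H + M + K + 1) q \<and> (\<forall>u<p. walk e q u p \<le> int H)"
    by (rule AE_descent_block_after_low_walk[OF ec(1,2,4,5)])
  then show ?thesis
  proof eventually_elim
    case (elim q)
    then obtain H J j p where "j < J" and p: "p = int J * int (H + M + K + 1) - int (Suc j) * int (H + M + K + 1)"
      and blk: "descent_block c p (H + M + K + 1) q" and low: "\<forall>u<p. walk e q u p \<le> int H"
      unfolding Let_def by blast
    have "0 \<le> p" unfolding p using \<open>j < J\<close> by (simp add: mult_right_mono flip: left_diff_distrib)
    define r where "r = nat p + H + M"
    have r: "int r = p + int H + int M" unfolding r_def using \<open>0 \<le> p\<close> by simp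
    note across = walk_across_descent_block[OF ec(3) blk low, of "int r"]
    show ?case
      unfolding forward_good_def c_def[symmetric] e_def[symmetric]
    proof (intro exI conjI ballI)
      show "descent_block c (int r) (K + 1) q"
        using blk by (rule descent_block_mono) (use r in auto)
      show "walk e q u (int r) \<le> 0" if "u \<in> {0..int r}" for u
        using across(1)[of u] across(2)[of u] that r by (cases "u \<le> p") auto
      show "int M + walk e q 0 (int r) \<le> 0"
        using across(1)[of 0] \<open>0 \<le> p\<close> r by simp
    qed
  qed
qed

definition good_noise :: "real \<Rightarrow> real \<Rightarrow> nat \<Rightarrow> noise \<Rightarrow> bool" where
  "good_noise g1 g2 K q \<longleftrightarrow> (\<forall>k. q k < 1) \<and> (\<forall>t. pullback_good g1 g2 K (shift t q)) \<and>
     (\<forall>M. forward_good g1 g2 K M q)"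

lemma AE_good_noise:
  assumes "g1 > 0" "g2 > 0" "K \<ge> 1" "birth_prob g1 g2 K \<le> 1/4096"
  shows "AE q in Pn. good_noise g1 g2 K q"
proof -
  have "AE q in Pn. \<forall>t. pullback_good g1 g2 K (shift t q)"
    unfolding AE_all_countable using AE_shift[OF AE_pullback_good[OF assms]] by blast
  moreover have "AE q in Pn. \<forall>M. forward_good g1 g2 K M q"
    unfolding AE_all_countable using AE_forward_good[OF assms] by blast
  ultimately show ?thesis
    using AE_noise_less_1 by eventually_elim (simp add: good_noise_def)
qed

section \<open>The random attractor\<close>

lemma lim_nat_eq_iff:
  fixes X :: "nat \<Rightarrow> nat"
  shows "lim X = v \<longleftrightarrow> (\<exists>N. \<forall>n\<ge>N. X n = v) \<or> (\<not> (\<exists>w N. \<forall>n\<ge>N. X n = w) \<and> (THE _::nat. False) = v)"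
proof -
  have tendsto_iff: "X \<longlonglongrightarrow> w \<longleftrightarrow> (\<exists>N. \<forall>n\<ge>N. X n = w)" for w
    by (simp add: tendsto_discrete eventually_sequentially)
  show ?thesis
  proof (cases "\<exists>w N. \<forall>n\<ge>N. X n = w")
    case True
    then obtain w where w: "X \<longlonglongrightarrow> w" using tendsto_iff by blast
    then have "(\<exists>N. \<forall>n\<ge>N. X n = v) \<longleftrightarrow> w = v"
      using tendsto_iff[of v] LIMSEQ_unique by blast
    then show ?thesis using True limI[OF w] by auto
  next
    case False
    then have "(\<lambda>w. X \<longlonglongrightarrow> w) = (\<lambda>_. False)" using tendsto_iff by (intro ext) blast
    then have "lim X = (THE _::nat. False)" unfolding lim_def by simp
    then show ?thesis using False by auto
  qed
qed

lemma measurable_lim_nat [measurable]: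
  fixes f :: "nat \<Rightarrow> 'a \<Rightarrow> nat"
  assumes [measurable]: "\<And>n. f n \<in> measurable M (count_space UNIV)"
  shows "(\<lambda>x. lim (\<lambda>n. f n x)) \<in> measurable M (count_space UNIV)"
proof (subst measurable_count_space_eq2_countable, intro conjI ballI)
  fix v :: nat
  have "(\<lambda>x. lim (\<lambda>n. f n x)) -` {v} \<inter> space M = {x\<in>space M. (\<exists>N. \<forall>n\<ge>N. f n x = v) \<or>
      (\<not> (\<exists>w N. \<forall>n\<ge>N. f n x = w) \<and> (THE _::nat. False) = v)}"
    using lim_nat_eq_iff[of "\<lambda>n. f n _" v] by auto
  also have "\<dots> \<in> sets M" by measurable
  finally show "(\<lambda>x. lim (\<lambda>n. f n x)) -` {v} \<inter> space M \<in> sets M" .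
qed simp

lemma measurable_alim [measurable]: "(\<lambda>q. alim g1 g2 i q) \<in> measurable Pn (count_space UNIV)"
  unfolding alim_def aseq_def by measurable

lemma pdist_insert2: "pdist x {a, b} = min \<bar>real x - real a\<bar> \<bar>real x - real b\<bar>"
  unfolding pdist_def by (simp add: cInf_insert inf_min)

lemma pdist_eq_0: "finite T \<Longrightarrow> x \<in> T \<Longrightarrow> pdist x T = 0"
  unfolding pdist_def
  by (rule antisym, rule cINF_lower2[where x=x]) (auto intro: cINF_greatest)

lemma hdist_eq_0_if_subset: "finite T \<Longrightarrow> S \<subseteq> T \<Longrightarrow> hdist S T = 0"
  unfolding hdist_def using pdist_eq_0[of T] by (auto simp: subset_eq)

lemma measurable_hdist:
  assumes "finite B" and [measurable]: "\<And>x. (\<lambda>q. pdist (f q x) (T q)) \<in> borel_measurable M"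
  shows "(\<lambda>q. hdist (f q ` B) (T q)) \<in> borel_measurable M"
proof (cases "B = {}")
  case False
  then have "hdist (f q ` B) (T q) = (SUP x\<in>B. pdist (f q x) (T q))" for q
    unfolding hdist_def by (simp add: image_image)
  moreover have "(\<lambda>q. SUP x\<in>B. pdist (f q x) (T q)) \<in> borel_measurable M"
    using \<open>finite B\<close> by (intro borel_measurable_cSUP) (auto intro: countable_finite)
  ultimately show ?thesis by simp
qed (simp add: hdist_def)

lemma measure_gt_tendsto_0_if_AE_eventually_0:
  fixes D :: "nat \<Rightarrow> 'a \<Rightarrow> real"
  assumes "finite_measure M" and [measurable]: "\<And>n. D n \<in> borel_measurable M"
    and ae: "AE x in M. eventually (\<lambda>n. D n x = 0) sequentially" and "\<epsilon> > 0"
  shows "(\<lambda>n. measure M {x\<in>space M. D n x > \<epsilon>}) \<longlonglongrightarrow> 0"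
proof -
  interpret finite_measure M by fact
  define G where "G = (\<lambda>n. {x\<in>space M. \<exists>m\<ge>n. D m x \<noteq> 0})"
  have G_sets: "G n \<in> sets M" for n unfolding G_def by measurable
  have "AE x in M. x \<notin> (\<Inter>n. G n)"
    using ae
  proof eventually_elim
    case (elim x)
    then obtain N where "\<forall>m\<ge>N. D m x = 0" unfolding eventually_sequentially by blast
    then have "x \<notin> G N" unfolding G_def by blast
    then show ?case by blast
  qed
  then have "(\<Inter>n. G n) \<in> null_sets M"
    using G_sets by (subst AE_iff_null_sets) auto
  then have "measure M (\<Inter>n. G n) = 0"
    by (simp add: measure_def null_setsD1)
  moreover have "decseq G" unfolding decseq_def G_def by (auto; meson le_trans)
  then have "(\<lambda>n. measure M (G n)) \<longlonglongrightarrow> measure M (\<Inter>n. G n)"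
    using G_sets by (intro finite_Lim_measure_decseq) auto
  ultimately have lim: "(\<lambda>n. measure M (G n)) \<longlonglongrightarrow> 0" by simp
  have "measure M {x\<in>space M. D n x > \<epsilon>} \<le> measure M (G n)" for n
  proof (rule finite_measure_mono)
    show "{x\<in>space M. D n x > \<epsilon>} \<subseteq> G n" using \<open>\<epsilon> > 0\<close> unfolding G_def by force
  qed (rule G_sets)
  then show ?thesis
    by (intro tendsto_sandwich[OF _ _ tendsto_const lim]) simp_all
qed

lemma pullback_limits_aseq:
  assumes "pullback_limits g1 g2 q a0 a1"
  shows "aseq g1 g2 i q \<longlonglongrightarrow> (if even i then a0 else a1)"
proof (rule tendsto_eventually)
  have "eventually (\<lambda>s. phi g1 g2 s (shift (- int s) q) i = (if even (i + s) then a0 else a1)) sequentially"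
    using assms unfolding pullback_limits_def by blast
  from eventually_compose_filterlim[OF this mult_nat_left_at_top[of 2]]
  show "eventually (\<lambda>n. aseq g1 g2 i q n = (if even i then a0 else a1)) sequentially"
    unfolding aseq_def by simp
qed

lemma pullback_limits_alim:
  assumes "pullback_limits g1 g2 q a0 a1"
  shows "alim g1 g2 0 q = a0" "alim g1 g2 1 q = a1"
  using pullback_limits_aseq[OF assms, of 0] pullback_limits_aseq[OF assms, of 1]
  unfolding alim_def by (simp_all add: limI)

lemma pullback_limits_shift:
  assumes lim: "pullback_limits g1 g2 q a0 a1" and lim_n: "pullback_limits g1 g2 (shift (int n) q) b0 b1"
  shows "phi g1 g2 n q (if even i then a0 else a1) = (if even (i + n) then b0 else b1)"
proof -
  obtain S1 where S1: "\<And>s. s \<ge> S1 \<Longrightarrow> phi g1 g2 s (shift (- int s) q) i = (if even (i + s) then a0 else a1)"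
    using lim unfolding pullback_limits_def eventually_sequentially by blast
  obtain S2 where S2: "\<And>s. s \<ge> S2 \<Longrightarrow>
      phi g1 g2 s (shift (- int s) (shift (int n) q)) i = (if even (i + s) then b0 else b1)"
    using lim_n unfolding pullback_limits_def eventually_sequentially by blast
  define s where "s = 2 * (S1 + S2)"
  have "(if even (i + n) then b0 else b1) = phi g1 g2 (s + n) (shift (- int (s + n)) (shift (int n) q)) i"
    using S2[of "s + n"] unfolding s_def by simp
  also have "\<dots> = phi g1 g2 n q (phi g1 g2 s (shift (- int s) q) i)"
    using phi_add[of g1 g2 s n] by (simp add: shift_add)
  also have "phi g1 g2 s (shift (- int s) q) i = (if even i then a0 else a1)"
    using S1[of s] unfolding s_def by simp
  finally show ?thesis ..
qed

context
  fixes g1 g2 :: real and K :: nat and q :: noise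
  assumes g: "g1 > 0" "g2 > 0" "K \<ge> 1" and good: "good_noise g1 g2 K q"
begin

lemma good_noise_less_1: "\<forall>k. shift t q k < 1"
  using good unfolding good_noise_def by (simp add: shift_apply)

lemma good_noise_pullback_limits:
  "pullback_limits g1 g2 (shift t q) (alim g1 g2 0 (shift t q)) (alim g1 g2 1 (shift t q))"
proof -
  have "pullback_good g1 g2 K (shift t q)" using good unfolding good_noise_def by blast
  then obtain a0 a1 where "pullback_limits g1 g2 (shift t q) a0 a1"
    using pullback_good_imp_limits[OF g good_noise_less_1] by blast
  with pullback_limits_alim[OF this] show ?thesis by simp
qed

lemma good_noise_aseq_convergent: "convergent (aseq g1 g2 i q)"
  using pullback_limits_aseq[OF good_noise_pullback_limits[of 0]] by (auto simp: convergent_def)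

lemma good_noise_phi_alim:
  "phi g1 g2 n q (alim g1 g2 0 q) = (if even n then alim g1 g2 0 (shift (int n) q) else alim g1 g2 1 (shift (int n) q))"
  "phi g1 g2 n q (alim g1 g2 1 q) = (if even n then alim g1 g2 1 (shift (int n) q) else alim g1 g2 0 (shift (int n) q))"
  using pullback_limits_shift[OF good_noise_pullback_limits[of 0, unfolded shift_0]
      good_noise_pullback_limits[of "int n"], where i=0]
    pullback_limits_shift[OF good_noise_pullback_limits[of 0, unfolded shift_0]
      good_noise_pullback_limits[of "int n"], where i=1]
  by simp_all

lemma good_noise_period_2:
  "phi g1 g2 1 q (alim g1 g2 0 q) = alim g1 g2 1 (shift 1 q) \<and>
   phi g1 g2 1 q (alim g1 g2 1 q) = alim g1 g2 0 (shift 1 q)"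
  using good_noise_phi_alim[of 1] by simp

lemma good_noise_image_alim:
  "phi g1 g2 n q ` {alim g1 g2 0 q, alim g1 g2 1 q} = {alim g1 g2 0 (shift (int n) q), alim g1 g2 1 (shift (int n) q)}"
  using good_noise_phi_alim[of n] by (simp add: insert_commute)

lemma good_noise_alim_pullback:
  obtains s where "even s" "phi g1 g2 s (shift (- int s) q) 0 = alim g1 g2 0 q"
    "phi g1 g2 s (shift (- int s) q) 1 = alim g1 g2 1 q"
proof -
  note lim = good_noise_pullback_limits[of 0, unfolded shift_0 pullback_limits_def eventually_sequentially]
  obtain S0 where S0: "\<forall>s\<ge>S0. phi g1 g2 s (shift (- int s) q) 0 = (if even (0 + s) then alim g1 g2 0 q else alim g1 g2 1 q)"
    using lim by blast
  obtain S1 where S1: "\<forall>s\<ge>S1. phi g1 g2 s (shift (- int s) q) 1 = (if even (1 + s) then alim g1 g2 0 q else alim g1 g2 1 q)"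
    using lim by blast
  show ?thesis
    using S0[rule_format, of "2 * (S0 + S1)"] S1[rule_format, of "2 * (S0 + S1)"]
    by (intro that[of "2 * (S0 + S1)"]) auto
qed

lemma good_noise_alim_parity: "even (alim g1 g2 0 q)" "odd (alim g1 g2 1 q)"
  using good_noise_alim_pullback phi_parity[OF g(1) good_noise_less_1] by (metis add_0 even_add odd_one)+

lemma good_noise_alim_adjacent: "\<bar>int (alim g1 g2 0 q) - int (alim g1 g2 1 q)\<bar> = 1"
  using good_noise_alim_pullback phi_adjacent[OF g(1,2) good_noise_less_1, of _ _ 0] by (metis One_nat_def)

lemma good_noise_pullback_absorbed:
  assumes "finite B"
  shows "eventually (\<lambda>n. phi g1 g2 n (shift (- int n) q) ` B \<subseteq> {alim g1 g2 0 q, alim g1 g2 1 q}) sequentially"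
proof -
  have "\<forall>y\<in>B. eventually (\<lambda>n. phi g1 g2 n (shift (- int n) q) y \<in> {alim g1 g2 0 q, alim g1 g2 1 q}) sequentially"
  proof
    fix y
    from good_noise_pullback_limits[of 0, unfolded shift_0 pullback_limits_def, rule_format, of y]
    show "eventually (\<lambda>n. phi g1 g2 n (shift (- int n) q) y \<in> {alim g1 g2 0 q, alim g1 g2 1 q}) sequentially"
      by (rule eventually_mono) simp
  qed
  from eventually_ball_finite[OF assms this] show ?thesis
    by (rule eventually_mono) blast
qed

lemma good_noise_forward_absorbed:
  assumes "finite B"
  shows "eventually (\<lambda>n. phi g1 g2 n q ` B \<subseteq> {alim g1 g2 0 (shift (int n) q), alim g1 g2 1 (shift (int n) q)}) sequentially"
proof -
  let ?a0 = "alim g1 g2 0 q" and ?a1 = "alim g1 g2 1 q"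
  define M where "M = Max (insert ?a0 (insert ?a1 B))"
  have le_M: "x \<le> K + M" if "x \<in> insert ?a0 (insert ?a1 B)" for x
  proof -
    have "x \<le> M" unfolding M_def using assms that by (intro Max_ge) auto
    then show ?thesis by simp
  qed
  have "forward_good g1 g2 K M q" using good unfolding good_noise_def by blast
  then obtain N where N: "\<And>n x x'. n \<ge> N \<Longrightarrow> x \<le> K + M \<Longrightarrow> x' \<le> K + M \<Longrightarrow> even x = even x' \<Longrightarrow>
      phi g1 g2 n q x = phi g1 g2 n q x'"
    using forward_good_imp_coalescence[OF g good_noise_less_1[of 0, simplified]] by blast
  have "phi g1 g2 n q x \<in> {alim g1 g2 0 (shift (int n) q), alim g1 g2 1 (shift (int n) q)}"
    if "n \<ge> N" "x \<in> B" for n x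
  proof -
    define x' where "x' = (if even x then ?a0 else ?a1)"
    have "phi g1 g2 n q x = phi g1 g2 n q x'"
      using N[OF that(1)] le_M that(2) good_noise_alim_parity unfolding x'_def by auto
    moreover have "phi g1 g2 n q x' \<in> phi g1 g2 n q ` {?a0, ?a1}" unfolding x'_def by simp
    ultimately show ?thesis by (simp only: good_noise_image_alim)
  qed
  then show ?thesis unfolding eventually_sequentially by blast
qed

end

lemma borel_measurable_real_of_nat_valued [measurable (raw)]:
  "f \<in> measurable M (count_space UNIV) \<Longrightarrow> (\<lambda>x. real (f x)) \<in> borel_measurable M"
  by (erule measurable_compose) simp

lemma eventually_hdist_eq_0:
  "eventually (\<lambda>n. S n \<subseteq> {a n, b n}) F \<Longrightarrow> eventually (\<lambda>n. hdist (S n) {a n, b n} = 0) F"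
  by (erule eventually_mono) (simp add: hdist_eq_0_if_subset)

lemma random_finite_set_alim: "random_finite_set (\<lambda>q. {alim g1 g2 0 q, alim g1 g2 1 q})"
  unfolding random_finite_set_def pdist_insert2 by auto

lemma measurable_hdist_alim:
  assumes "finite B" "\<And>x. (\<lambda>q. f q x) \<in> measurable Pn (count_space UNIV)"
  shows "(\<lambda>q. hdist (f q ` B) {alim g1 g2 0 (shift t q), alim g1 g2 1 (shift t q)}) \<in> borel_measurable Pn"
  using assms(2) by (intro measurable_hdist[OF assms(1)]) (simp add: pdist_insert2)

lemma weak_and_forward_attractor_if_AE_absorbed:
  assumes "random_finite_set A" "invariant g1 g2 A"
    and measurable: "\<And>B n. finite B \<Longrightarrow> (\<lambda>q. hdist (phi g1 g2 n q ` B) (A (shift (int n) q))) \<in> borel_measurable Pn"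
    and absorbed: "\<And>B. finite B \<Longrightarrow>
      AE q in Pn. eventually (\<lambda>n. hdist (phi g1 g2 n q ` B) (A (shift (int n) q)) = 0) sequentially"
  shows "weak_attractor g1 g2 A \<and> forward_attractor g1 g2 A"
proof -
  have "AE q in Pn. (\<lambda>n. hdist (phi g1 g2 n q ` B) (A (shift (int n) q))) \<longlonglongrightarrow> 0" if "finite B" for B
    using absorbed[OF that] by eventually_elim (rule tendsto_eventually)
  moreover have "(\<lambda>n. measure Pn {q\<in>space Pn. hdist (phi g1 g2 n q ` B) (A (shift (int n) q)) > \<epsilon>}) \<longlonglongrightarrow> 0"
    if "finite B" "\<epsilon> > 0" for B \<epsilon>
    using prob_space.finite_measure[OF prob_space_Pn] measurable[OF that(1)] absorbed[OF that(1)] that(2)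
    by (rule measure_gt_tendsto_0_if_AE_eventually_0)
  ultimately show ?thesis
    unfolding weak_attractor_def forward_attractor_def using assms(1,2) measurable by auto
qed

lemma pullback_attractor_if_AE_absorbed:
  assumes "random_finite_set A" "invariant g1 g2 A"
    and absorbed: "\<And>B. finite B \<Longrightarrow>
      AE q in Pn. eventually (\<lambda>n. hdist (phi g1 g2 n (shift (- int n) q) ` B) (A q) = 0) sequentially"
  shows "pullback_attractor g1 g2 A"
proof -
  have "AE q in Pn. (\<lambda>n. hdist (phi g1 g2 n (shift (- int n) q) ` B) (A q)) \<longlonglongrightarrow> 0" if "finite B" for B
    using absorbed[OF that] by eventually_elim (rule tendsto_eventually)
  then show ?thesis
    unfolding pullback_attractor_def using assms by blast
qed

context
  fixes g1 g2 :: real and K :: nat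
  assumes g: "g1 > 0" "g2 > 0" "K \<ge> 1" and AE_good: "AE q in Pn. good_noise g1 g2 K q"
begin

lemma invariant_alim: "invariant g1 g2 (\<lambda>q. {alim g1 g2 0 q, alim g1 g2 1 q})"
  unfolding invariant_def using AE_good by eventually_elim (use good_noise_image_alim[OF g] in blast)

lemma AE_forward_absorbed:
  "finite B \<Longrightarrow> AE q in Pn. eventually (\<lambda>n. hdist (phi g1 g2 n q ` B)
     {alim g1 g2 0 (shift (int n) q), alim g1 g2 1 (shift (int n) q)} = 0) sequentially"
  using AE_good by eventually_elim (rule eventually_hdist_eq_0, erule good_noise_forward_absorbed[OF g])

lemma AE_pullback_absorbed:
  "finite B \<Longrightarrow> AE q in Pn. eventually (\<lambda>n. hdist (phi g1 g2 n (shift (- int n) q) ` B)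
     {alim g1 g2 0 q, alim g1 g2 1 q} = 0) sequentially"
  using AE_good by eventually_elim (rule eventually_hdist_eq_0, erule good_noise_pullback_absorbed[OF g])

end

theorem theorem4p10:
  fixes g1 g2 :: real
  assumes "g1 > 0" and "g2 > 0"
  defines "A \<equiv> (\<lambda>q. {alim g1 g2 0 q, alim g1 g2 1 q})"
  shows "(\<forall>i\<in>{0,1}. AE q in Pn. convergent (aseq g1 g2 i q))
       \<and> weak_attractor g1 g2 A
       \<and> (AE q in Pn. phi g1 g2 1 q (alim g1 g2 0 q) = alim g1 g2 1 (shift 1 q)
                    \<and> phi g1 g2 1 q (alim g1 g2 1 q) = alim g1 g2 0 (shift 1 q))
       \<and> pullback_attractor g1 g2 A
       \<and> forward_attractor g1 g2 A
       \<and> (AE q in Pn. \<bar>int (alim g1 g2 0 q) - int (alim g1 g2 1 q)\<bar> = 1)"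
proof -
  obtain K where K: "K \<ge> 1" "birth_prob g1 g2 K \<le> 1/4096"
    using birth_prob_small[OF assms(1,2), of "1/4096"] by auto
  note g = assms(1,2) K(1)
  have good: "AE q in Pn. good_noise g1 g2 K q"
    by (rule AE_good_noise[OF g K(2)])
  have "weak_attractor g1 g2 A \<and> forward_attractor g1 g2 A"
    unfolding A_def using random_finite_set_alim invariant_alim[OF g good]
    by (rule weak_and_forward_attractor_if_AE_absorbed)
      (rule measurable_hdist_alim[OF _ measurable_phi] AE_forward_absorbed[OF g good], assumption)+
  moreover have "pullback_attractor g1 g2 A"
    unfolding A_def using random_finite_set_alim invariant_alim[OF g good] AE_pullback_absorbed[OF g good]
    by (rule pullback_attractor_if_AE_absorbed)
  moreover have "AE q in Pn. \<forall>i\<in>{0, 1}. convergent (aseq g1 g2 i q)"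
    using good by eventually_elim (simp add: good_noise_aseq_convergent[OF g])
  moreover have "AE q in Pn. phi g1 g2 1 q (alim g1 g2 0 q) = alim g1 g2 1 (shift 1 q)
      \<and> phi g1 g2 1 q (alim g1 g2 1 q) = alim g1 g2 0 (shift 1 q)"
    using good by eventually_elim (rule good_noise_period_2[OF g])
  moreover have "AE q in Pn. \<bar>int (alim g1 g2 0 q) - int (alim g1 g2 1 q)\<bar> = 1"
    using good by eventually_elim (rule good_noise_alim_adjacent[OF g])
  ultimately show ?thesis by auto
qed

end
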